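(* Let $p$ be prime and let $V<W\le\mathbb F_p^k$ be subspaces with $\dim W=\dim V+1$. Let $v\in V^\perp\setminus W^\perp$ be an element of minimum Hamming weight in $V^\perp\setminus W^\perp$, and let $S=\mathrm{Supp}(v)$. Then $\pi_S(V)=\langle\pi_S(v)\rangle^\perp$, where the orthogonal complement is taken in $\mathbb F_p^S$.
   Context: For $x\in\mathbb F_p^k$, $\mathrm{Supp}(x)=\{i:x_i\ne0\}$, and its Hamming weight is $|\mathrm{Supp}(x)|$. $\pi_S:\mathbb F_p^k\to\mathbb F_p^S$ is the coordinate projection. $\perp$ denotes the orthogonal complement under the standard dot product. *)

theory Defs
  imports "HOL-Analysis.Analysis"
begin

text \<open>Vectors in F_p^k are modelled as 'a ^ 'n, where 'a is a field with p elements
  (i.e. F_p) and k = CARD('n).\<close>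

definition dotp :: "'a::field ^ 'n \<Rightarrow> 'a ^ 'n \<Rightarrow> 'a" where
  "dotp x y = (\<Sum>i\<in>UNIV. x $ i * y $ i)"

definition orth :: "('a::field ^ 'n) set \<Rightarrow> ('a ^ 'n) set" where
  "orth V = {x. \<forall>y\<in>V. dotp x y = 0}"

definition Supp :: "'a::zero ^ 'n \<Rightarrow> 'n set" where
  "Supp x = {i. x $ i \<noteq> 0}"

definition hweight :: "'a::zero ^ 'n \<Rightarrow> nat" where
  "hweight x = card (Supp x)"

text \<open>F_p^S is identified with the vectors of 'a ^ 'n vanishing outside S;
  the projection pi_S zeroes the coordinates outside S.\<close>

definition coord_space :: "'n set \<Rightarrow> ('a::zero ^ 'n) set" where
  "coord_space S = {y. \<forall>i. i \<notin> S \<longrightarrow> y $ i = 0}"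

definition proj :: "'n set \<Rightarrow> 'a::zero ^ 'n \<Rightarrow> 'a ^ 'n" where
  "proj S x = (\<chi> i. if i \<in> S then x $ i else 0)"

definition orth_in :: "'n set \<Rightarrow> ('a::field ^ 'n) set \<Rightarrow> ('a ^ 'n) set" where
  "orth_in S A = {y \<in> coord_space S. \<forall>a\<in>A. (\<Sum>i\<in>S. y $ i * a $ i) = 0}"

end

theory Submission
  imports Defs
begin

text \<open>Every vector of \<open>V\<^sup>\<bottom>\<close> supported inside \<open>S = Supp v\<close> is a multiple of \<open>v\<close>: subtracting
  a multiple of \<open>v\<close> kills one coordinate of such a \<open>u\<close>, so minimality forces the difference \<open>u'\<close>
  into \<open>W\<^sup>\<bottom>\<close>; if \<open>u' \<noteq> 0\<close>, subtracting a multiple of \<open>u'\<close> from \<open>v\<close> gives a lighter vector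
  of \<open>V\<^sup>\<bottom> - W\<^sup>\<bottom>\<close>. Hence the annihilator of \<open>\<pi>\<^sub>S(V)\<close> inside \<open>\<bbbF>\<^sub>p\<^sup>S\<close> is the line
  \<open>\<langle>v\<rangle>\<close>, and \<open>\<pi>\<^sub>S(V) = \<langle>v\<rangle>\<^sup>\<bottom>\<close> by biduality of orthogonal complements.\<close>

lemma dotp_commute: "dotp x y = dotp y (x::'a::field ^ 'n)"
  by (simp add: dotp_def mult.commute)

lemma subspace_orth: "vec.subspace (orth (A :: ('a::field ^ 'n) set))"
  unfolding vec.subspace_def orth_def dotp_def
  by (simp add: sum.distrib distrib_right mult.assoc flip: sum_distrib_left)

lemma subspace_coord_space: "vec.subspace (coord_space S :: ('a::field ^ 'n) set)"
  unfolding vec.subspace_def coord_space_def by simp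

lemma mem_coord_space_iff_Supp: "x \<in> coord_space S \<longleftrightarrow> Supp x \<subseteq> S"
  by (auto simp: coord_space_def Supp_def)

lemma linear_proj: "Vector_Spaces.linear (*s) (*s) (proj S :: 'a::field ^ 'n \<Rightarrow> _)"
  unfolding Vector_Spaces.linear_iff by (simp add: vec.vector_space_axioms proj_def vec_eq_iff)

lemma proj_in_coord_space: "proj S x \<in> coord_space S"
  by (simp add: proj_def coord_space_def)

lemma proj_coord_space: "x \<in> coord_space S \<Longrightarrow> proj S x = x"
  by (simp add: proj_def coord_space_def vec_eq_iff)

lemma dotp_proj: "dotp x (proj S y) = dotp (proj S x) y"
  unfolding dotp_def proj_def by (intro sum.cong) auto

lemma orth_in_eq: "orth_in S A = coord_space S \<inter> orth A"
proof -
  have "(\<Sum>i\<in>S. y $ i * a $ i) = dotp y a" if "y \<in> coord_space S" for y a :: "'a ^ 'b"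
    using that unfolding dotp_def coord_space_def
    by (intro sum.mono_neutral_left) auto
  then show ?thesis
    by (auto simp: orth_in_def orth_def)
qed

lemma coord_space_inter_orth_proj_image:
  "coord_space S \<inter> orth (proj S ` V) = coord_space S \<inter> orth V"
  by (auto simp: orth_def dotp_proj proj_coord_space)

lemma exists_orth_dotp_nonzero:
  fixes y :: "'a::field ^ 'n"
  assumes "vec.subspace U" and "y \<notin> U"
  shows "\<exists>x\<in>orth U. dotp x y \<noteq> 0"
proof -
  obtain B where B: "B \<subseteq> U" "vec.independent B" "U \<subseteq> vec.span B"
    by (rule vec.basis_exists)
  have "y \<notin> vec.span B"
    using vec.span_minimal[OF B(1) assms(1)] assms(2) by blast
  then have indep: "vec.independent (insert y B)" and "y \<notin> B"
    using B(2) vec.independent_insertI vec.span_base by blast+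
  \<comment> \<open>The witness is any row of the matrix of a linear map killing \<open>U\<close> and sending \<open>y\<close> to \<open>(1,\<dots>,1)\<close>.\<close>
  fix j :: 'n
  define c :: "'a ^ 'n" where "c = (\<chi> i. 1)"
  define f where "f = vec.construct (insert y B) (\<lambda>b. if b = y then c else 0)"
  have lin: "Vector_Spaces.linear (*s) (*s) f"
    unfolding f_def by (rule vec.linear_construct[OF indep])
  have "f y = c" and fB: "\<And>b. b \<in> B \<Longrightarrow> f b = 0"
    unfolding f_def using \<open>y \<notin> B\<close> by (auto simp: vec.construct_basis[OF indep])
  have "f z = 0" if "z \<in> U" for z
    using vec.linear_eq_0_on_span[OF lin fB] B(3) that by blast
  moreover have "dotp (matrix f $ j) z = f z $ j" for z
    by (simp add: matrix_works[OF lin, symmetric] matrix_vector_mult_def dotp_def)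
  ultimately show ?thesis
    using \<open>f y = c\<close> by (intro bexI[of _ "matrix f $ j"]) (auto simp: orth_def c_def)
qed

lemma coord_space_orth_orth:
  fixes U :: "('a::field ^ 'n) set"
  assumes "vec.subspace U" and "U \<subseteq> coord_space S"
  shows "coord_space S \<inter> orth (coord_space S \<inter> orth U) = U"
proof
  show "U \<subseteq> coord_space S \<inter> orth (coord_space S \<inter> orth U)"
    using assms(2) by (auto simp: orth_def dotp_commute)
next
  show "coord_space S \<inter> orth (coord_space S \<inter> orth U) \<subseteq> U"
  proof (rule subsetI, rule ccontr)
    fix y assume y: "y \<in> coord_space S \<inter> orth (coord_space S \<inter> orth U)" and "y \<notin> U"
    then obtain x where "x \<in> orth U" and "dotp x y \<noteq> 0"
      using exists_orth_dotp_nonzero[OF assms(1)] by blast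
    moreover have "proj S x \<in> orth U"
      using \<open>x \<in> orth U\<close> assms(2) by (auto simp: orth_def dotp_proj[symmetric] proj_coord_space)
    then have "dotp y (proj S x) = 0"
      using y proj_in_coord_space by (auto simp: orth_def)
    moreover have "dotp y (proj S x) = dotp x y"
      using y by (metis dotp_commute dotp_proj proj_coord_space IntD1)
    ultimately show False
      by simp
  qed
qed

lemma coord_space_eliminate:
  fixes x y :: "'a::field ^ 'n"
  assumes "x \<in> coord_space T" and "y \<in> coord_space T" and "x $ i \<noteq> 0"
  shows "y - (y $ i / x $ i) *s x \<in> coord_space (T - {i})"
  using assms by (auto simp: coord_space_def)

lemma min_weight_orth_of_Supp_psubset:
  assumes "\<forall>w \<in> orth V - orth W. hweight v \<le> hweight w"
    and "u \<in> orth V" and "Supp u \<subset> Supp v"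
  shows "u \<in> orth W"
proof (rule ccontr)
  assume "u \<notin> orth W"
  then have "hweight v \<le> hweight u"
    using assms(1,2) by blast
  moreover have "hweight u < hweight v"
    unfolding hweight_def using assms(3) by (simp add: psubset_card_mono)
  ultimately show False by simp
qed

lemma min_weight_coord_space_inter_orth_orth:
  fixes v :: "'a::field ^ 'n"
  assumes v: "v \<in> orth V - orth W"
    and min: "\<forall>w \<in> orth V - orth W. hweight v \<le> hweight w"
    and u: "u \<in> coord_space (Supp v) \<inter> orth V \<inter> orth W"
  shows "u = 0"
proof (rule ccontr)
  assume "u \<noteq> 0"
  then obtain j where j: "u $ j \<noteq> 0"
    by (auto simp: vec_eq_iff)
  define w where "w = v - (v $ j / u $ j) *s u"
  have "w \<in> orth V"
    unfolding w_def using v u by (intro vec.subspace_diff vec.subspace_scale subspace_orth) auto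
  moreover have "w \<in> coord_space (Supp v - {j})" and "j \<in> Supp v"
    unfolding w_def using j u by (auto intro: coord_space_eliminate simp: coord_space_def Supp_def)
  then have "Supp w \<subset> Supp v"
    by (auto simp: mem_coord_space_iff_Supp)
  ultimately have "w \<in> orth W"
    using min_weight_orth_of_Supp_psubset[OF min] by blast
  then have "w + (v $ j / u $ j) *s u \<in> orth W"
    using u by (intro vec.subspace_add vec.subspace_scale subspace_orth) auto
  then show False
    using v by (simp add: w_def)
qed

lemma min_weight_coord_space_orth:
  fixes v :: "'a::field ^ 'n"
  assumes v: "v \<in> orth V - orth W"
    and min: "\<forall>w \<in> orth V - orth W. hweight v \<le> hweight w"
  shows "coord_space (Supp v) \<inter> orth V = vec.span {v}"
proof
  have "v \<in> coord_space (Supp v) \<inter> orth V"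
    using v by (simp add: mem_coord_space_iff_Supp)
  then show "vec.span {v} \<subseteq> coord_space (Supp v) \<inter> orth V"
    by (intro vec.span_minimal vec.subspace_inter subspace_coord_space subspace_orth) auto
next
  show "coord_space (Supp v) \<inter> orth V \<subseteq> vec.span {v}"
  proof
    fix u assume u: "u \<in> coord_space (Supp v) \<inter> orth V"
    have "v \<noteq> 0"
      using v vec.subspace_0[OF subspace_orth] by auto
    then obtain i where i: "i \<in> Supp v"
      by (auto simp: Supp_def vec_eq_iff)
    define u' where "u' = u - (u $ i / v $ i) *s v"
    have "u' \<in> orth V"
      unfolding u'_def using u v by (intro vec.subspace_diff vec.subspace_scale subspace_orth) auto
    moreover have "u' \<in> coord_space (Supp v - {i})"
      unfolding u'_def using u i
      by (intro coord_space_eliminate) (auto simp: mem_coord_space_iff_Supp Supp_def)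
    moreover have "Supp u' \<subset> Supp v"
      using calculation(2) i by (auto simp: mem_coord_space_iff_Supp)
    ultimately have "u' \<in> coord_space (Supp v) \<inter> orth V \<inter> orth W"
      using min_weight_orth_of_Supp_psubset[OF min] by (auto simp: mem_coord_space_iff_Supp)
    then have "u' = 0"
      by (rule min_weight_coord_space_inter_orth_orth[OF v min])
    then show "u \<in> vec.span {v}"
      unfolding u'_def by (simp add: vec.span_singleton)
  qed
qed

theorem corollary7p4:
  fixes p :: nat
    and V W :: "('a::{field,finite} ^ 'n) set"
    and v :: "'a ^ 'n"
  assumes "prime p" and "CARD('a) = p"
    and "vec.subspace V" and "vec.subspace W" and "V \<subset> W"
    and "vec.dim W = vec.dim V + 1"
    and "v \<in> orth V - orth W"
    and "\<forall>u \<in> orth V - orth W. hweight v \<le> hweight u"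
  shows "proj (Supp v) ` V = orth_in (Supp v) (vec.span {proj (Supp v) v})"
proof -
  let ?S = "Supp v"
  have subspace: "vec.subspace (proj ?S ` V)"
    using linear_proj assms(3) by (rule vec.linear_subspace_image)
  have "proj ?S ` V \<subseteq> coord_space ?S"
    using proj_in_coord_space by blast
  then have "proj ?S ` V = coord_space ?S \<inter> orth (coord_space ?S \<inter> orth (proj ?S ` V))"
    using coord_space_orth_orth[OF subspace] by simp
  also have "\<dots> = coord_space ?S \<inter> orth (vec.span {v})"
    using min_weight_coord_space_orth[OF assms(7,8)] by (simp add: coord_space_inter_orth_proj_image)
  also have "\<dots> = orth_in ?S (vec.span {proj ?S v})"
    by (simp add: orth_in_eq proj_coord_space mem_coord_space_iff_Supp)
  finally show ?thesis .
qed

end
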